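(* Let $A,B\in\mathbb{T}^{k\times n}$ be such that $A\odot B^T$ is symmetric. Then any two rows of the $k\times 2n$ matrix $(A|B)$ are (tropically) orthogonal.
   Context: $\mathbb{T}=\mathbb{R}\cup\{\infty\}$ with $a\oplus b=\min(a,b)$, $a\odot b=a+b$. $(A\odot B^T)_{ij}=\min_{l\in[n]}(A_{il}+B_{jl})$. The columns of $(A|B)$ are indexed by $[2n]=\{1,\dots,n,\bar1,\dots,\bar n\}$ (columns of $A$ by $1,\dots,n$, of $B$ by $\bar1,\dots,\bar n$), with $\bar{\bar i}=i$. Two vectors $x,y\in\mathbb{T}^{2n}$ are orthogonal if $\min_{l\in[2n]}(x_l+y_{\bar l})$ is attained at least twice. *)

theory Defs
  imports Complex_Main "HOL-Library.Extended_Real"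
begin

text \<open>Tropical semiring T = R \<union> {\<infinity>} (min-plus) modelled inside ereal: an element is
  "tropical" if it is not -\<infinity>.
  Matrices in T^(k x n) are functions nat \<Rightarrow> nat \<Rightarrow> ereal, only indices i < k, l < n matter.\<close>

definition trop_matrix :: "nat \<Rightarrow> nat \<Rightarrow> (nat \<Rightarrow> nat \<Rightarrow> ereal) \<Rightarrow> bool" where
  "trop_matrix k n A \<longleftrightarrow> (\<forall>i<k. \<forall>l<n. A i l \<noteq> -\<infinity>)"

definition trop_mult_transpose :: "nat \<Rightarrow> (nat \<Rightarrow> nat \<Rightarrow> ereal) \<Rightarrow> (nat \<Rightarrow> nat \<Rightarrow> ereal) \<Rightarrow> nat \<Rightarrow> nat \<Rightarrow> ereal" where
  "trop_mult_transpose n A B i j = Min {A i l + B j l | l. l < n}"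

definition trop_symmetric :: "nat \<Rightarrow> (nat \<Rightarrow> nat \<Rightarrow> ereal) \<Rightarrow> bool" where
  "trop_symmetric k M \<longleftrightarrow> (\<forall>i<k. \<forall>j<k. M i j = M j i)"

definition concat_row :: "nat \<Rightarrow> (nat \<Rightarrow> nat \<Rightarrow> ereal) \<Rightarrow> (nat \<Rightarrow> nat \<Rightarrow> ereal) \<Rightarrow> nat \<Rightarrow> nat \<Rightarrow> ereal" where
  "concat_row n A B i l = (if l < n then A i l else B i (l - n))"

definition bar :: "nat \<Rightarrow> nat \<Rightarrow> nat" where
  "bar n l = (if l < n then l + n else l - n)"

definition trop_orthogonal :: "nat \<Rightarrow> (nat \<Rightarrow> ereal) \<Rightarrow> (nat \<Rightarrow> ereal) \<Rightarrow> bool" where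
  "trop_orthogonal n x y \<longleftrightarrow>
     (let m = Min {x l + y (bar n l) | l. l < 2 * n} in
      \<exists>l1 l2. l1 < 2 * n \<and> l2 < 2 * n \<and> l1 \<noteq> l2 \<and>
              x l1 + y (bar n l1) = m \<and> x l2 + y (bar n l2) = m)"

end

theory Submission
  imports Defs
begin

text \<open>The pairing terms of rows i and j of (A|B) over the first n columns are the terms
  A i l + B j l whose minimum is (A \<odot> B^T) i j, and over the last n columns they are the
  terms A j l + B i l whose minimum is (A \<odot> B^T) j i. By symmetry both halves have the same
  minimum, so the overall minimum is attained once in each half, i.e. at two distinct columns.\<close>

lemma concat_row_pairing_low:
  assumes "l < n"
  shows "concat_row n A B i l + concat_row n A B j (bar n l) = A i l + B j l"
  using assms by (simp add: concat_row_def bar_def)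

lemma concat_row_pairing_high:
  assumes "l < n"
  shows "concat_row n A B i (n + l) + concat_row n A B j (bar n (n + l)) = A j l + B i l"
  using assms by (simp add: concat_row_def bar_def add.commute)

lemma concat_row_pairing_set:
  "{concat_row n A B i l + concat_row n A B j (bar n l) | l. l < 2 * n}
     = {A i l + B j l | l. l < n} \<union> {A j l + B i l | l. l < n}"
  (is "?P = ?L \<union> ?H")
proof
  show "?P \<subseteq> ?L \<union> ?H"
  proof
    fix v assume "v \<in> ?P"
    then obtain l where l: "l < 2 * n" "v = concat_row n A B i l + concat_row n A B j (bar n l)"
      by blast
    show "v \<in> ?L \<union> ?H"
    proof (cases "l < n")
      case True
      then have "v = A i l + B j l" using l(2) by (simp add: concat_row_pairing_low)
      then show ?thesis using True by blast
    next
      case False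
      then obtain l' where l': "l = n + l'" "l' < n"
        using l(1) by (intro that[of "l - n"]) auto
      then have "v = A j l' + B i l'" using l(2) by (simp add: concat_row_pairing_high)
      then show ?thesis using l'(2) by blast
    qed
  qed
  show "?L \<union> ?H \<subseteq> ?P"
  proof
    fix v assume "v \<in> ?L \<union> ?H"
    then consider l where "l < n" "v = A i l + B j l" | l where "l < n" "v = A j l + B i l"
      by blast
    then show "v \<in> ?P"
    proof cases
      case (1 l)
      then have "v = concat_row n A B i l + concat_row n A B j (bar n l)" "l < 2 * n"
        by (simp_all add: concat_row_pairing_low)
      then show ?thesis by blast
    next
      case (2 l)
      then have "v = concat_row n A B i (n + l) + concat_row n A B j (bar n (n + l))" "n + l < 2 * n"
        by (simp_all add: concat_row_pairing_high)
      then show ?thesis by blast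
    qed
  qed
qed

lemma trop_mult_transpose_attained:
  assumes "n \<ge> 1"
  obtains l where "l < n" "A i l + B j l = trop_mult_transpose n A B i j"
proof -
  have "finite {A i l + B j l | l. l < n}" "{A i l + B j l | l. l < n} \<noteq> {}"
    using assms by (auto intro: exI[of _ 0])
  from Min_in[OF this] show ?thesis
    using that unfolding trop_mult_transpose_def by auto
qed

lemma Min_concat_row_pairing:
  assumes "n \<ge> 1"
  shows "Min {concat_row n A B i l + concat_row n A B j (bar n l) | l. l < 2 * n}
           = min (trop_mult_transpose n A B i j) (trop_mult_transpose n A B j i)"
  using assms
  by (simp only: concat_row_pairing_set trop_mult_transpose_def, subst Min_Un)
     (auto intro: exI[of _ 0])

text \<open>Only the symmetry relation for the pair (i, j) is needed.\<close>

lemma trop_orthogonal_concat_rows: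
  assumes "n \<ge> 1"
    and "trop_mult_transpose n A B i j = trop_mult_transpose n A B j i"
  shows "trop_orthogonal n (concat_row n A B i) (concat_row n A B j)"
proof -
  let ?m = "trop_mult_transpose n A B i j"
  obtain l1 where l1: "l1 < n" "A i l1 + B j l1 = ?m"
    using trop_mult_transpose_attained[OF assms(1)] by blast
  obtain l2 where l2: "l2 < n" "A j l2 + B i l2 = ?m"
    using trop_mult_transpose_attained[OF assms(1)] assms(2) by metis
  show ?thesis
    unfolding trop_orthogonal_def Let_def Min_concat_row_pairing[OF assms(1)] assms(2)[symmetric]
  proof (intro exI conjI)
    show "l1 < 2 * n" "n + l2 < 2 * n" "l1 \<noteq> n + l2" using l1(1) l2(1) by simp_all
    show "concat_row n A B i l1 + concat_row n A B j (bar n l1) = min ?m ?m"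
      using l1 concat_row_pairing_low by simp
    show "concat_row n A B i (n + l2) + concat_row n A B j (bar n (n + l2)) = min ?m ?m"
      using l2 concat_row_pairing_high by simp
  qed
qed

theorem proposition4p15:
  fixes k n :: nat and A B :: "nat \<Rightarrow> nat \<Rightarrow> ereal"
  assumes "n \<ge> 1"
    and "trop_matrix k n A" and "trop_matrix k n B"
    and "trop_symmetric k (trop_mult_transpose n A B)"
    and "i < k" and "j < k" and "i \<noteq> j"
  shows "trop_orthogonal n (concat_row n A B i) (concat_row n A B j)"
proof -
  have "trop_mult_transpose n A B i j = trop_mult_transpose n A B j i"
    using assms(4-6) unfolding trop_symmetric_def by blast
  with assms(1) show ?thesis by (rule trop_orthogonal_concat_rows)
qed

end
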